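(* Let $X$ be a connected, locally compact Polish space with a partial order $\le$ whose strict part is $<$, and suppose there is $M\subseteq X$ such that: (i) $M$ has at least two elements, is connected, and is totally ordered by $<$; (ii) for every $m\in M$ and every neighborhood $U$ of $m$ in $X$ there are $\underline m,\overline m\in M$ with $m\in[\underline m,\overline m]\subseteq U$, where moreover $\overline m$ can be chosen with $m<\overline m$ if $m$ is not the largest element of $M$, and $\underline m$ can be chosen with $\underline m<m$ if $m$ is not the smallest element of $M$; (iii) for every bounded sequence $(x_n)$ in $X$ there are $\underline m,\overline m\in M$ with $\underline m\le x_n\le\overline m$ for all sufficiently large $n$. Let $\succeq$ be a continuous strictly monotone preference on $X$. Then for every $x\in X$ there is a unique $m^*(x)\in M$ with $x\sim m^*(x)$. Moreover, for any continuous strictly increasing $u:X\to\mathbb{R}$, the function $u_\succeq(x)=u(m^*(x))$ is a continuous utility representation of $\succeq$.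
   Context: $[\underline m,\overline m]=\{z\in X:\underline m\le z\le\overline m\}$. A preference is a complete transitive binary relation; continuous if closed in $X\times X$; strictly monotone if $y<x$ implies $x\succ y$; $x\sim y$ means $x\succeq y$ and $y\succeq x$. A function $u$ is strictly increasing if $x<y$ implies $u(x)<u(y)$; it represents $\succeq$ if $x\succeq y\iff u(x)\ge u(y)$. Boundedness in (iii) refers to a metric compatible with the topology of $X$. *)

theory Defs
  imports "HOL-Analysis.Analysis"
begin

definition preference :: "('a \<Rightarrow> 'a \<Rightarrow> bool) \<Rightarrow> bool" where
  "preference R \<longleftrightarrow> (\<forall>x y. R x y \<or> R y x) \<and> (\<forall>x y z. R x y \<longrightarrow> R y z \<longrightarrow> R x z)"

definition continuous_pref :: "('a::topological_space \<Rightarrow> 'a \<Rightarrow> bool) \<Rightarrow> bool" where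
  "continuous_pref R \<longleftrightarrow> closed {(x, y). R x y}"

definition strict_pref :: "('a \<Rightarrow> 'a \<Rightarrow> bool) \<Rightarrow> 'a \<Rightarrow> 'a \<Rightarrow> bool" where
  "strict_pref R x y \<longleftrightarrow> R x y \<and> \<not> R y x"

definition indiff :: "('a \<Rightarrow> 'a \<Rightarrow> bool) \<Rightarrow> 'a \<Rightarrow> 'a \<Rightarrow> bool" where
  "indiff R x y \<longleftrightarrow> R x y \<and> R y x"

definition strictly_monotone_pref :: "('a::order \<Rightarrow> 'a \<Rightarrow> bool) \<Rightarrow> bool" where
  "strictly_monotone_pref R \<longleftrightarrow> (\<forall>x y. y < x \<longrightarrow> strict_pref R x y)"

end

theory Submission
  imports Defs
begin

text \<open>
  On the chain \<open>M\<close> strict monotonicity makes the preference coincide with \<open>\<ge>\<close>, so an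
  element of \<open>M\<close> indifferent to \<open>x\<close> is unique; calling it \<open>m\<^sup>*(x)\<close> (\<open>indiff_rep\<close>),
  \<open>x \<succeq> y\<close> holds iff \<open>m\<^sup>*(x) \<ge> m\<^sup>*(y)\<close>. Existence holds because the closed sets of points
  weakly better and weakly worse than \<open>x\<close> cover the connected set \<open>M\<close>, and both meet it
  (at the bounds of \<open>x\<close> in \<open>M\<close>). The map \<open>m\<^sup>*\<close> is continuous: a neighbourhood
  \<open>[lo, hi]\<close> of \<open>m\<^sup>*(x)\<close> with \<open>lo < m\<^sup>*(x) < hi\<close> pulls back to the open set of points
  strictly between \<open>lo\<close> and \<open>hi\<close> in preference.
\<close>

lemma closed_upper_contour: "continuous_pref R \<Longrightarrow> closed {y. R y a}"
proof -
  assume "continuous_pref R"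
  then have "closed {(x, y). R x y}"
    unfolding continuous_pref_def .
  then have "closed ((\<lambda>y. (y, a)) -` {(x, y). R x y})"
    by (rule closed_vimage) (intro continuous_intros)
  then show ?thesis by simp
qed

lemma closed_lower_contour: "continuous_pref R \<Longrightarrow> closed {y. R a y}"
proof -
  assume "continuous_pref R"
  then have "closed {(x, y). R x y}"
    unfolding continuous_pref_def .
  then have "closed ((\<lambda>y. (a, y)) -` {(x, y). R x y})"
    by (rule closed_vimage) (intro continuous_intros)
  then show ?thesis by simp
qed

lemma open_strict_upper_contour:
  assumes "preference R" "continuous_pref R"
  shows "open {y. strict_pref R y a}"
proof -
  have "{y. strict_pref R y a} = - {y. R a y}"
    using assms(1) unfolding preference_def strict_pref_def by blast
  then show ?thesis using closed_lower_contour[OF assms(2)] by (simp add: open_Compl)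
qed

lemma open_strict_lower_contour:
  assumes "preference R" "continuous_pref R"
  shows "open {y. strict_pref R a y}"
proof -
  have "{y. strict_pref R a y} = - {y. R y a}"
    using assms(1) unfolding preference_def strict_pref_def by blast
  then show ?thesis using closed_upper_contour[OF assms(2)] by (simp add: open_Compl)
qed

definition indiff_rep :: "('a \<Rightarrow> 'a \<Rightarrow> bool) \<Rightarrow> 'a set \<Rightarrow> 'a \<Rightarrow> 'a" where
  "indiff_rep R M x = (THE m. m \<in> M \<and> indiff R x m)"

locale monotone_preference_chain =
  fixes R :: "'a::{order, topological_space} \<Rightarrow> 'a \<Rightarrow> bool" and M :: "'a set"
  assumes preference: "preference R"
    and strictly_monotone: "strictly_monotone_pref R"
    and chain: "\<forall>a\<in>M. \<forall>b\<in>M. a \<noteq> b \<longrightarrow> a < b \<or> b < a"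
begin

lemma pref_refl: "R x x"
  using preference unfolding preference_def by blast

lemma pref_trans: "R x y \<Longrightarrow> R y z \<Longrightarrow> R x z"
  using preference unfolding preference_def by blast

lemma pref_total: "R x y \<or> R y x"
  using preference unfolding preference_def by blast

lemma pref_if_ge: "y \<le> x \<Longrightarrow> R x y"
  using strictly_monotone pref_refl
  unfolding strictly_monotone_pref_def strict_pref_def by (cases "x = y") auto

lemma chain_le_cases: "a \<in> M \<Longrightarrow> b \<in> M \<Longrightarrow> a \<le> b \<or> b \<le> a"
  using chain by (auto simp: order.order_iff_strict)

lemma pref_iff_ge_on_chain:
  assumes "a \<in> M" "b \<in> M"
  shows "R a b \<longleftrightarrow> b \<le> a"
proof
  assume "R a b"
  then have "\<not> a < b"
    using strictly_monotone unfolding strictly_monotone_pref_def strict_pref_def by blast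
  then show "b \<le> a" using chain assms by (auto simp: order.order_iff_strict)
qed (rule pref_if_ge)

lemma indiff_on_chain_unique:
  assumes "m\<^sub>1 \<in> M" "m\<^sub>2 \<in> M" "indiff R x m\<^sub>1" "indiff R x m\<^sub>2"
  shows "m\<^sub>1 = m\<^sub>2"
proof -
  have "R m\<^sub>1 m\<^sub>2" "R m\<^sub>2 m\<^sub>1"
    using assms(3,4) pref_trans unfolding indiff_def by blast+
  then show ?thesis using pref_iff_ge_on_chain assms(1,2) by auto
qed

lemma indiff_exists_on_chain:
  assumes "continuous_pref R" "connected M"
    and "lo \<in> M" "hi \<in> M" "lo \<le> x" "x \<le> hi"
  shows "\<exists>m\<in>M. indiff R x m"
proof -
  have "closed {y. R y x}" "closed {y. R x y}"
    using closed_upper_contour[OF assms(1)] closed_lower_contour[OF assms(1)] by auto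
  moreover have "M \<subseteq> {y. R y x} \<union> {y. R x y}"
    using pref_total by auto
  moreover have "{y. R y x} \<inter> M \<noteq> {}" "{y. R x y} \<inter> M \<noteq> {}"
    using assms(3-6) pref_if_ge by auto
  ultimately have "{y. R y x} \<inter> {y. R x y} \<inter> M \<noteq> {}"
    using assms(2) unfolding connected_closed by blast
  then show ?thesis unfolding indiff_def by auto
qed

lemma strict_mono_le_iff_on_chain:
  fixes u :: "'a \<Rightarrow> 'b::order"
  assumes "\<forall>x y. x < y \<longrightarrow> u x < u y" "a \<in> M" "b \<in> M"
  shows "u a \<le> u b \<longleftrightarrow> a \<le> b"
  using chain assms(2,3) assms(1)[rule_format, of a b] assms(1)[rule_format, of b a]
  by (cases "a = b") (auto simp: less_le_not_le)

end

locale preference_scale = monotone_preference_chain +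
  assumes indiff_exists: "\<exists>m\<in>M. indiff R x m"
begin

abbreviation rep :: "'a \<Rightarrow> 'a" where
  "rep \<equiv> indiff_rep R M"

lemma ex1_indiff: "\<exists>!m. m \<in> M \<and> indiff R x m"
  using indiff_exists indiff_on_chain_unique by blast

lemma indiff_rep_mem: "rep x \<in> M" and indiff_indiff_rep: "indiff R x (rep x)"
  using theI'[OF ex1_indiff] unfolding indiff_rep_def by blast+

lemma indiff_rep_eq: "m \<in> M \<Longrightarrow> indiff R x m \<Longrightarrow> rep x = m"
  by (rule indiff_on_chain_unique[OF indiff_rep_mem _ indiff_indiff_rep])

lemma indiff_rep_of_mem: "a \<in> M \<Longrightarrow> rep a = a"
  by (rule indiff_rep_eq) (simp_all add: indiff_def pref_refl)

lemma pref_iff_indiff_rep_le: "R x y \<longleftrightarrow> rep y \<le> rep x"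
proof -
  have "R x y \<longleftrightarrow> R (rep x) (rep y)"
    using indiff_indiff_rep[of x] indiff_indiff_rep[of y] unfolding indiff_def by (meson pref_trans)
  then show ?thesis using pref_iff_ge_on_chain[OF indiff_rep_mem indiff_rep_mem] by blast
qed

lemma strict_pref_iff_indiff_rep_less:
  assumes "a \<in> M"
  shows "strict_pref R a y \<longleftrightarrow> rep y < a" and "strict_pref R y a \<longleftrightarrow> a < rep y"
  using pref_iff_indiff_rep_le[of a y] pref_iff_indiff_rep_le[of y a] indiff_rep_of_mem[OF assms]
  unfolding strict_pref_def by (simp_all add: less_le_not_le)

text \<open>
  The case distinction reflects hypothesis (ii): the strict bound \<open>rep x < hi\<close> is only
  available when \<open>rep x\<close> is not the largest element of \<open>M\<close>; otherwise the bound is global.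
\<close>

lemma eventually_indiff_rep_le:
  assumes "continuous_pref R" "hi \<in> M" "rep x \<le> hi"
    and "(\<exists>m\<in>M. rep x < m) \<longrightarrow> rep x < hi"
  shows "eventually (\<lambda>y. rep y \<le> hi) (nhds x)"
proof (cases "\<exists>m\<in>M. rep x < m")
  case True
  then have "x \<in> {y. strict_pref R hi y}"
    using assms(2,4) strict_pref_iff_indiff_rep_less by simp
  then have "eventually (\<lambda>y. y \<in> {y. strict_pref R hi y}) (nhds x)"
    by (rule eventually_nhds_in_open[OF open_strict_lower_contour[OF preference assms(1)]])
  then show ?thesis
    by (rule eventually_mono) (simp add: strict_pref_iff_indiff_rep_less[OF assms(2)])
next
  case False
  then have "rep y \<le> rep x" for y
    using indiff_rep_mem chain_le_cases[OF indiff_rep_mem indiff_rep_mem, of x y]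
    by (auto simp: order.order_iff_strict)
  then show ?thesis using assms(3) order_trans by (blast intro: always_eventually)
qed

lemma eventually_indiff_rep_ge:
  assumes "continuous_pref R" "lo \<in> M" "lo \<le> rep x"
    and "(\<exists>m\<in>M. m < rep x) \<longrightarrow> lo < rep x"
  shows "eventually (\<lambda>y. lo \<le> rep y) (nhds x)"
proof (cases "\<exists>m\<in>M. m < rep x")
  case True
  then have "x \<in> {y. strict_pref R y lo}"
    using assms(2,4) strict_pref_iff_indiff_rep_less by simp
  then have "eventually (\<lambda>y. y \<in> {y. strict_pref R y lo}) (nhds x)"
    by (rule eventually_nhds_in_open[OF open_strict_upper_contour[OF preference assms(1)]])
  then show ?thesis
    by (rule eventually_mono) (simp add: strict_pref_iff_indiff_rep_less[OF assms(2)])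
next
  case False
  then have "rep x \<le> rep y" for y
    using indiff_rep_mem chain_le_cases[OF indiff_rep_mem indiff_rep_mem, of x y]
    by (auto simp: order.order_iff_strict)
  then show ?thesis using assms(3) order_trans by (blast intro: always_eventually)
qed

lemma continuous_indiff_rep:
  assumes "continuous_pref R"
    and nbhd: "\<forall>m\<in>M. \<forall>U. open U \<and> m \<in> U \<longrightarrow>
        (\<exists>lo\<in>M. \<exists>hi\<in>M. m \<in> {lo..hi} \<and> {lo..hi} \<subseteq> U
          \<and> ((\<exists>m'\<in>M. m < m') \<longrightarrow> m < hi)
          \<and> ((\<exists>m'\<in>M. m' < m) \<longrightarrow> lo < m))"
  shows "continuous_on UNIV rep"
  unfolding continuous_on_topological
proof (intro ballI allI impI)
  fix x U assume "open U" "rep x \<in> U"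
  then obtain lo hi where lo: "lo \<in> M" "lo \<le> rep x" "(\<exists>m\<in>M. m < rep x) \<longrightarrow> lo < rep x"
    and hi: "hi \<in> M" "rep x \<le> hi" "(\<exists>m\<in>M. rep x < m) \<longrightarrow> rep x < hi"
    and "{lo..hi} \<subseteq> U"
    using nbhd[rule_format, OF indiff_rep_mem[of x], of U] by auto
  have "eventually (\<lambda>y. lo \<le> rep y \<and> rep y \<le> hi) (nhds x)"
    using eventually_indiff_rep_ge[OF assms(1) lo] eventually_indiff_rep_le[OF assms(1) hi]
    by (rule eventually_conj)
  then have "eventually (\<lambda>y. rep y \<in> U) (nhds x)"
    by (rule eventually_mono) (use \<open>{lo..hi} \<subseteq> U\<close> in auto)
  then show "\<exists>A. open A \<and> x \<in> A \<and> (\<forall>y\<in>UNIV. y \<in> A \<longrightarrow> rep y \<in> U)"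
    unfolding eventually_nhds by blast
qed

lemma utility_indiff_rep:
  fixes u :: "'a \<Rightarrow> 'b::linorder"
  assumes "\<forall>x y. x < y \<longrightarrow> u x < u y"
  shows "R x y \<longleftrightarrow> u (rep y) \<le> u (rep x)"
  using strict_mono_le_iff_on_chain[OF assms indiff_rep_mem indiff_rep_mem] pref_iff_indiff_rep_le
  by blast

end

theorem lemma13:
  fixes M :: "'a::{polish_space, order} set"
    and R :: "'a \<Rightarrow> 'a \<Rightarrow> bool"
  assumes conn: "connected (UNIV :: 'a set)"
    and lc: "locally compact (UNIV :: 'a set)"
    and M_two: "\<exists>a\<in>M. \<exists>b\<in>M. a \<noteq> b"
    and M_conn: "connected M"
    and M_tot: "\<forall>a\<in>M. \<forall>b\<in>M. a \<noteq> b \<longrightarrow> a < b \<or> b < a"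
    and M_nbhd: "\<forall>m\<in>M. \<forall>U. open U \<and> m \<in> U \<longrightarrow>
        (\<exists>lo\<in>M. \<exists>hi\<in>M. m \<in> {lo..hi} \<and> {lo..hi} \<subseteq> U
          \<and> ((\<exists>m'\<in>M. m < m') \<longrightarrow> m < hi)
          \<and> ((\<exists>m'\<in>M. m' < m) \<longrightarrow> lo < m))"
    and M_bdd: "\<forall>x :: nat \<Rightarrow> 'a. bounded (range x) \<longrightarrow>
        (\<exists>lo\<in>M. \<exists>hi\<in>M. eventually (\<lambda>n. lo \<le> x n \<and> x n \<le> hi) sequentially)"
    and pref: "preference R"
    and cont: "continuous_pref R"
    and mono: "strictly_monotone_pref R"
  shows "(\<forall>x. \<exists>!m. m \<in> M \<and> indiff R x m) \<and>
    (\<forall>u :: 'a \<Rightarrow> real. continuous_on UNIV u \<longrightarrow> (\<forall>x y. x < y \<longrightarrow> u x < u y) \<longrightarrow>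
       continuous_on UNIV (\<lambda>x. u (THE m. m \<in> M \<and> indiff R x m)) \<and>
       (\<forall>x y. R x y \<longleftrightarrow> u (THE m. m \<in> M \<and> indiff R x m) \<ge> u (THE m. m \<in> M \<and> indiff R y m)))"
proof -
  interpret monotone_preference_chain R M
    using pref mono M_tot by unfold_locales
  have "\<exists>m\<in>M. indiff R x m" for x
  proof -
    have "bounded (range (\<lambda>n::nat. x))" by simp
    then obtain lo hi where "lo \<in> M" "hi \<in> M" "eventually (\<lambda>n::nat. lo \<le> x \<and> x \<le> hi) sequentially"
      using M_bdd by blast
    then show ?thesis using indiff_exists_on_chain[OF cont M_conn] by auto
  qed
  then interpret preference_scale R M
    by unfold_locales
  have "continuous_on UNIV (\<lambda>x. u (rep x))" if "continuous_on UNIV u" for u :: "'a \<Rightarrow> real"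
    using continuous_on_compose2[OF that continuous_indiff_rep[OF cont M_nbhd]] by simp
  moreover have "R x y \<longleftrightarrow> u (rep y) \<le> u (rep x)" if "\<forall>x y. x < y \<longrightarrow> u x < u y"
    for u :: "'a \<Rightarrow> real" and x y
    using utility_indiff_rep[OF that] .
  ultimately show ?thesis
    unfolding indiff_rep_def[symmetric] using ex1_indiff by auto
qed

end
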